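(* For every word $\omega\in[n]^*$, the set $B_\omega\subseteq\mathbb{Z}^n$ is connected, where a subset of $\mathbb{Z}^n$ is regarded as a graph by joining two of its elements by an edge iff their Euclidean distance is $1$.
   Context: Let $[n]=\{1,\dots,n\}$, $e_1,\dots,e_n$ the standard basis of $\mathbb{Z}^n$; $\varepsilon$ is the empty word, $*$ concatenation. For words $\omega$ over $[n]$ define recursively $\delta^i_\omega\in\mathbb{Z}^n$: $\delta^i_\varepsilon=e_i$; $\delta^j_{\omega*j}=\delta^j_\omega$, $\delta^i_{\omega*j}=\delta^i_\omega-\delta^j_\omega$ for $i\ne j$. Let $B_\varepsilon=\{0\}$ and $B_{\omega*j}=B_\omega+\{0,\delta^j_\omega\}$ (Minkowski sum). *)

theory Defs
  imports Complex_Main "HOL-Library.Function_Algebras"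
begin

(* Index set [n] is modelled by a finite type 'n; Z^n is 'n => int;
   words over [n] are lists of type 'n list (appending a letter = xs @ [j]). *)

definition unitvec :: "'n \<Rightarrow> ('n \<Rightarrow> int)" where
  "unitvec i = (\<lambda>k. if k = i then 1 else 0)"

(* delta on the reversed word: deltaR (j # w) corresponds to delta_(rev w * j) *)
fun deltaR :: "'n list \<Rightarrow> 'n \<Rightarrow> ('n \<Rightarrow> int)" where
  "deltaR [] i = unitvec i"
| "deltaR (j # w) i = (if i = j then deltaR w j else deltaR w i - deltaR w j)"

definition delta :: "'n list \<Rightarrow> 'n \<Rightarrow> ('n \<Rightarrow> int)" where
  "delta w i = deltaR (rev w) i"

fun BR :: "'n list \<Rightarrow> ('n \<Rightarrow> int) set" where
  "BR [] = {0}"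
| "BR (j # w) = {b + d | b d. b \<in> BR w \<and> d \<in> {0, deltaR w j}}"

definition B :: "'n list \<Rightarrow> ('n \<Rightarrow> int) set" where
  "B w = BR (rev w)"

lemma delta_simps:
  "delta [] i = unitvec i"
  "delta (w @ [j]) j = delta w j"
  "i \<noteq> j \<Longrightarrow> delta (w @ [j]) i = delta w i - delta w j"
  by (simp_all add: delta_def)

lemma B_simps:
  "B [] = {0}"
  "B (w @ [j]) = {b + d | b d. b \<in> B w \<and> d \<in> {0, delta w j}}"
  by (simp_all add: B_def delta_def)

definition unit_dist :: "('n::finite \<Rightarrow> int) \<Rightarrow> ('n \<Rightarrow> int) \<Rightarrow> bool" where
  "unit_dist x y \<longleftrightarrow> sqrt (real_of_int (\<Sum>k\<in>UNIV. (x k - y k)^2)) = 1"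

definition grid_connected :: "('n::finite \<Rightarrow> int) set \<Rightarrow> bool" where
  "grid_connected S \<longleftrightarrow>
     (\<forall>x\<in>S. \<forall>y\<in>S. (\<lambda>a b. a \<in> S \<and> b \<in> S \<and> unit_dist a b)\<^sup>*\<^sup>* x y)"

end

theory Submission
  imports Defs
begin

(* Appending a letter j to w gives B (w @ [j]) = B w \<union> (B w + delta w j), the union of a
   set with a translate of itself. Translates of connected sets are connected, so by induction
   it suffices to find one edge between the two halves. It comes from the invariant that for
   every i there are b, b' in B w with b + delta w i = b' + e_i, which is itself preserved by
   appending a letter. *)

definition grid_edge :: "('n::finite \<Rightarrow> int) set \<Rightarrow> ('n \<Rightarrow> int) \<Rightarrow> ('n \<Rightarrow> int) \<Rightarrow> bool" where
  "grid_edge S a b \<longleftrightarrow> a \<in> S \<and> b \<in> S \<and> unit_dist a b"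

lemma grid_connected_iff_grid_edge:
  "grid_connected S \<longleftrightarrow> (\<forall>x\<in>S. \<forall>y\<in>S. (grid_edge S)\<^sup>*\<^sup>* x y)"
  unfolding grid_connected_def grid_edge_def ..

lemma unit_dist_sym: "unit_dist x y \<longleftrightarrow> unit_dist y x"
  unfolding unit_dist_def by (simp add: power2_commute)

lemma unit_dist_translate: "unit_dist (a + c) (b + c) \<longleftrightarrow> unit_dist a b"
  unfolding unit_dist_def by simp

lemma unit_dist_add_unitvec: "unit_dist x (x + unitvec k)"
proof -
  have "(\<Sum>t\<in>UNIV. (x t - (x + unitvec k) t)\<^sup>2) = (\<Sum>t\<in>UNIV. if t = k then 1 else 0::int)"
    by (rule sum.cong) (auto simp: unitvec_def)
  then show ?thesis
    unfolding unit_dist_def by simp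
qed

lemma symp_grid_edge: "symp (grid_edge S)"
  unfolding grid_edge_def by (auto intro: sympI simp: unit_dist_sym)

lemma grid_edge_mono: "S \<subseteq> T \<Longrightarrow> grid_edge S \<le> grid_edge T"
  unfolding grid_edge_def by auto

lemma grid_connected_translate:
  assumes "grid_connected S"
  shows "grid_connected ((\<lambda>x. x + c) ` S)"
proof -
  have "(grid_edge ((\<lambda>x. x + c) ` S))\<^sup>*\<^sup>* (x + c) (y + c)" if "(grid_edge S)\<^sup>*\<^sup>* x y" for x y
    using that
  proof (induction rule: rtranclp_induct)
    case (step y z)
    then have "grid_edge ((\<lambda>x. x + c) ` S) (y + c) (z + c)"
      by (auto simp: grid_edge_def unit_dist_translate)
    with step.IH show ?case
      by (meson rtranclp.rtrancl_into_rtrancl)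
  qed simp
  with assms show ?thesis
    unfolding grid_connected_iff_grid_edge by blast
qed

lemma grid_connected_Un:
  assumes S: "grid_connected S" and T: "grid_connected T"
    and "a \<in> S" "b \<in> T" "unit_dist a b"
  shows "grid_connected (S \<union> T)"
proof -
  let ?E = "grid_edge (S \<union> T)"
  have S_le: "(grid_edge S)\<^sup>*\<^sup>* \<le> ?E\<^sup>*\<^sup>*" and T_le: "(grid_edge T)\<^sup>*\<^sup>* \<le> ?E\<^sup>*\<^sup>*"
    by (simp_all add: rtranclp_mono grid_edge_mono)
  have "?E b a"
    using assms(3-5) by (simp add: grid_edge_def unit_dist_sym)
  have to_a: "?E\<^sup>*\<^sup>* x a" if "x \<in> S \<union> T" for x
  proof (cases "x \<in> S")
    case True
    with S \<open>a \<in> S\<close> S_le show ?thesis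
      unfolding grid_connected_iff_grid_edge by blast
  next
    case False
    with that T \<open>b \<in> T\<close> T_le have "?E\<^sup>*\<^sup>* x b"
      unfolding grid_connected_iff_grid_edge by blast
    with \<open>?E b a\<close> show ?thesis
      by (meson rtranclp.rtrancl_into_rtrancl)
  qed
  have "?E\<^sup>*\<^sup>* x y" if "x \<in> S \<union> T" "y \<in> S \<union> T" for x y
  proof -
    have "?E\<^sup>*\<^sup>* a y"
      using to_a[OF \<open>y \<in> S \<union> T\<close>] by (rule sympD[OF symp_rtranclp[OF symp_grid_edge]])
    with to_a[OF \<open>x \<in> S \<union> T\<close>] show ?thesis
      by (rule rtranclp_trans)
  qed
  then show ?thesis
    unfolding grid_connected_iff_grid_edge by blast
qed

lemma BR_Cons [simp]: "BR (j # w) = BR w \<union> (\<lambda>b. b + deltaR w j) ` BR w"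
  by (auto simp: image_def) (metis add.right_neutral)

declare BR.simps(2) [simp del]

lemma BR_deltaR_unitvec: "\<exists>b\<in>BR w. \<exists>b'\<in>BR w. b + deltaR w i = b' + unitvec i"
proof (induction w arbitrary: i)
  case (Cons j w)
  show ?case
  proof (cases "i = j")
    case True
    from Cons.IH[of j] obtain b b' where bb: "b \<in> BR w" "b' \<in> BR w"
      "b + deltaR w j = b' + unitvec j" by blast
    have "b + deltaR (j # w) i = b' + unitvec i"
      using True bb(3) by simp
    moreover have "b \<in> BR (j # w)" "b' \<in> BR (j # w)"
      using bb(1,2) by simp_all
    ultimately show ?thesis by blast
  next
    case False
    from Cons.IH[of i] obtain b b' where bb: "b \<in> BR w" "b' \<in> BR w"
      "b + deltaR w i = b' + unitvec i" by blast
    have "(b + deltaR w j) + deltaR (j # w) i = b' + unitvec i"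
      using False bb(3) by (simp add: algebra_simps)
    moreover have "b + deltaR w j \<in> BR (j # w)" "b' \<in> BR (j # w)"
      using bb(1,2) by simp_all
    ultimately show ?thesis by blast
  qed
qed simp

lemma grid_connected_BR: "grid_connected (BR w)"
proof (induction w)
  case Nil
  show ?case
    by (simp add: grid_connected_def)
next
  case (Cons j w)
  obtain b b' where "b \<in> BR w" "b' \<in> BR w" and edge: "b' + unitvec j = b + deltaR w j"
    using BR_deltaR_unitvec[of w j] by metis
  have "b + deltaR w j \<in> (\<lambda>x. x + deltaR w j) ` BR w"
    using \<open>b \<in> BR w\<close> by blast
  moreover have "unit_dist b' (b + deltaR w j)"
    by (metis edge unit_dist_add_unitvec)
  ultimately show ?case
    unfolding BR_Cons
    by (rule grid_connected_Un[OF Cons.IH grid_connected_translate[OF Cons.IH] \<open>b' \<in> BR w\<close>])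
qed

theorem lemma3p5:
  fixes w :: "'n::finite list"
  shows "grid_connected (B w)"
  unfolding B_def by (rule grid_connected_BR)

end
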